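(* Let $A$ be a nontrivial closed class of decision tables from $\mathcal M_2^\infty$ and $\psi$ a bounded complexity measure. If the function $Z_{\psi,A}$ is not everywhere defined, then the function $\mathcal H^\infty_{\psi,A}$ is not everywhere defined.
   Context: Notation: $\omega=\{0,1,2,\dots\}$; $\mathcal P(\omega)$ is the set of nonempty finite subsets of $\omega$; $E_2=\{0,1\}$. $P=\{f_i:i\in\omega\}$ is a set of attributes, $f_i\neq f_j$ for $i\ne j$. Decision tables: $\mathcal M_2^\infty$ is the set of rectangular tables filled with numbers from $E_2$, whose columns are labeled with pairwise different attributes from $P$, whose rows are pairwise different, and each row of which is labeled with a set from $\mathcal P(\omega)$ (its set of decisions). The empty table (no rows) is denoted $\Lambda$ and belongs to $\mathcal M_2^\infty$. For $T\in\mathcal M_2^\infty$: $\Pi(T)$ is the intersection of the decision sets of all rows (common decisions); $\mathrm{At}(T)$ is the set of attributes labeling columns; $N(T)$ is the number of rows. For nonempty $T$ and a word $\alpha=(f_{i_1},\delta_1)\cdots(f_{i_m},\delta_m)$ with $f_{i_j}\in\mathrm{At}(T)$, $\delta_j\in E_2$, $T\alpha$ is the subtable of $T$ consisting of the rows having value $\delta_j$ in the column $f_{i_j}$ for all $j$; $T\lambda=T$ for the empty word $\lambda$. Operations: for $D\subseteq\mathrm{At}(T)$, $I(D,T)$ is obtained from $T$ by deleting the columns labeled with attributes from $D$ and, in each group of rows coinciding on the remaining columns, keeping only the first row; $I(\mathrm{At}(T),T)=\Lambda$. For $\nu:E_2^{|\mathrm{At}(T)|}\to\mathcal P(\omega)$,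 $J(\nu,T)$ is obtained by replacing the decision set of each row $\bar\delta$ by $\nu(\bar\delta)$. $[T]=\{J(\nu,I(D,T)):D\subseteq\mathrm{At}(T),\ \nu:E_2^{|\mathrm{At}(T)\setminus D|}\to\mathcal P(\omega)\}$; for nonempty $A\subseteq\mathcal M_2^\infty$, $[A]=\bigcup_{T\in A}[T]$. $A$ is a closed class if $[A]=A$; nontrivial if it contains a nonempty table. Decision trees: a $2$-decision tree is a finite directed rooted tree with at least two nodes in which the root and the edges leaving the root are unlabeled, each terminal node is labeled with a decision from $\omega$, and each other node is labeled with an attribute from $P$, each edge leaving such a node being labeled with a number from $E_2$. $\mathrm{At}(\Gamma)$ is the set of attributes labeling nodes of $\Gamma$. For a complete path $\tau=v_1,d_1,\dots,v_m,d_m,v_{m+1}$ (from the root to a terminal node), $\pi(\tau)=\lambda$ if $m=1$, and otherwise $\pi(\tau)=(f_{i_2},\delta_2)\cdots(f_{i_m},\delta_m)$ where $v_j$ is labeled $f_{i_j}$ and $d_j$ is labeled $\delta_j$; $T(\tau)=T\pi(\tau)$. For $T\ne\Lambda$, a nondeterministic decision tree for $T$ is a $2$-decision tree $\Gamma$ with $\mathrm{At}(\Gamma)\subseteq\mathrm{At}(T)$ such that every row of $T$ belongs to $T(\tau)$ for some complete path $\tau$, and for every complete path $\tau$ either $T(\tau)=\Lambda$ or the decision at the terminal node of $\tau$ belongs to $\Pi(T(\tau))$. A deterministic decision tree for $T$ is a nondeterministic decision tree for $T$ in which, additionally, exactly one edge leaves the root and the edges leaving any node that is neither the root nor terminal are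 labeled with pairwise different numbers. Complexity measures: a partially bounded complexity measure is a function $\psi:P^*\to\omega$ on finite words over $P$ such that for all words $\alpha_1,\alpha_2$: $\psi(\alpha_1)=0$ iff $\alpha_1=\lambda$; $\psi(\alpha_1)$ is invariant under permutation of letters; $\psi(\alpha_1)\le\psi(\alpha_1\alpha_2)$; $\psi(\alpha_1\alpha_2)\le\psi(\alpha_1)+\psi(\alpha_2)$. It is bounded if in addition $\psi(\alpha)\ge|\alpha|$ for all $\alpha$. $\psi$ is extended to words $(f_{i_1},\delta_1)\cdots(f_{i_m},\delta_m)$ by $\psi(f_{i_1}\cdots f_{i_m})$ ($\psi(\lambda)=0$). For a $2$-decision tree $\Gamma$, $\psi(\Gamma)=\max_\tau\psi(\pi(\tau))$ over complete paths. For $T\ne\Lambda$, $\psi^d(T)$ (resp. $\psi^a(T)$) is the minimum of $\psi(\Gamma)$ over deterministic (resp. nondeterministic) decision trees $\Gamma$ for $T$; $\psi^d(\Lambda)=\psi^a(\Lambda)=0$. Parameters: $m_\psi(T)=\max\{\psi(f_i):f_i\in\mathrm{At}(T)\}$, $m_\psi(\Lambda)=0$. A table $Q\in\mathcal M_2^\infty$ is complete if $N(Q)=2^{|\mathrm{At}(Q)|}$; $Z(T)$ is the maximum number of columns of a complete table in $[T]$ if such tables exist, and $0$ otherwise; $Z(\Lambda)=0$. For $n\in\omega$: $A_\psi(n)=\{T\in A:m_\psi(T)\le n\}$; $Z_{\psi,A}(n)$ is undefined if $\{Z(T):T\in A_\psi(n)\}$ is infinite, else its maximum; $\mathcal H^\infty_{\psi,A}(n)$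 is undefined if $\{\psi^d(T):T\in A,\psi^a(T)\le n\}$ is infinite, else its maximum. *)

theory Defs
  imports Main "HOL-Library.Multiset"
begin

text \<open>Attributes f_i are represented by their index i :: nat; decisions are nat;
  E_2 = {0,1} is represented by bool (False = 0, True = 1).\<close>

record dtable =
  cols :: "nat list"
  rows :: "(bool list \<times> nat set) list"

definition Lambda :: dtable where
  "Lambda = \<lparr>cols = [], rows = []\<rparr>"

definition wf_table :: "dtable \<Rightarrow> bool" where
  "wf_table T \<longleftrightarrow>
     distinct (cols T) \<and>
     (rows T = [] \<longleftrightarrow> cols T = []) \<and>
     distinct (map fst (rows T)) \<and>
     (\<forall>p \<in> set (rows T). length (fst p) = length (cols T) \<and> finite (snd p) \<and> snd p \<noteq> {})"

definition M2 :: "dtable set" where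
  "M2 = {T. wf_table T}"

definition At :: "dtable \<Rightarrow> nat set" where
  "At T = set (cols T)"

definition Nrows :: "dtable \<Rightarrow> nat" where
  "Nrows T = length (rows T)"

definition Pi_dec :: "dtable \<Rightarrow> nat set" where
  "Pi_dec T = (\<Inter>p \<in> set (rows T). snd p)"

definition row_val :: "nat list \<Rightarrow> bool list \<Rightarrow> nat \<Rightarrow> bool option" where
  "row_val cs r f = map_of (zip cs r) f"

definition subtab :: "dtable \<Rightarrow> (nat \<times> bool) list \<Rightarrow> dtable" where
  "subtab T \<alpha> =
    (let rs = filter (\<lambda>p. \<forall>q \<in> set \<alpha>. row_val (cols T) (fst p) (fst q) = Some (snd q)) (rows T)
     in if rs = [] then Lambda else T\<lparr>rows := rs\<rparr>)"

definition keep_first :: "(bool list \<times> nat set) list \<Rightarrow> (bool list \<times> nat set) list" where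
  "keep_first xs = foldl (\<lambda>acc x. if fst x \<in> fst ` set acc then acc else acc @ [x]) [] xs"

definition opI :: "nat set \<Rightarrow> dtable \<Rightarrow> dtable" where
  "opI D T =
    (if At T \<subseteq> D then Lambda
     else \<lparr>cols = filter (\<lambda>c. c \<notin> D) (cols T),
           rows = keep_first
             (map (\<lambda>p. (map snd (filter (\<lambda>cv. fst cv \<notin> D) (zip (cols T) (fst p))), snd p))
                  (rows T))\<rparr>)"

definition opJ :: "(bool list \<Rightarrow> nat set) \<Rightarrow> dtable \<Rightarrow> dtable" where
  "opJ \<nu> T = T\<lparr>rows := map (\<lambda>p. (fst p, \<nu> (fst p))) (rows T)\<rparr>"

definition closure :: "dtable \<Rightarrow> dtable set" where
  "closure T = {opJ \<nu> (opI D T) | D \<nu>.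
      D \<subseteq> At T \<and>
      (\<forall>\<delta>. length \<delta> = card (At T - D) \<longrightarrow> finite (\<nu> \<delta>) \<and> \<nu> \<delta> \<noteq> {})}"

definition closure_set :: "dtable set \<Rightarrow> dtable set" where
  "closure_set A = (\<Union>T\<in>A. closure T)"

definition closed_class :: "dtable set \<Rightarrow> bool" where
  "closed_class A \<longleftrightarrow> A \<subseteq> M2 \<and> A \<noteq> {} \<and> closure_set A = A"

definition nontrivial :: "dtable set \<Rightarrow> bool" where
  "nontrivial A \<longleftrightarrow> (\<exists>T\<in>A. T \<noteq> Lambda)"

text \<open>A 2-decision tree is given by the nonempty list of the children of its (unlabelled) root.\<close>

datatype dnode = Leaf nat | Node nat "(bool \<times> dnode) list"

type_synonym dtree = "dnode list"

inductive wf_node :: "dnode \<Rightarrow> bool" where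
  "wf_node (Leaf d)"
| "cs \<noteq> [] \<Longrightarrow> (\<forall>p \<in> set cs. wf_node (snd p)) \<Longrightarrow> wf_node (Node f cs)"

inductive det_node :: "dnode \<Rightarrow> bool" where
  "det_node (Leaf d)"
| "distinct (map fst cs) \<Longrightarrow> (\<forall>p \<in> set cs. det_node (snd p)) \<Longrightarrow> det_node (Node f cs)"

inductive node_att :: "nat \<Rightarrow> dnode \<Rightarrow> bool" where
  "node_att f (Node f cs)"
| "p \<in> set cs \<Longrightarrow> node_att g (snd p) \<Longrightarrow> node_att g (Node f cs)"

inductive node_path :: "dnode \<Rightarrow> (nat \<times> bool) list \<Rightarrow> nat \<Rightarrow> bool" where
  "node_path (Leaf d) [] d"
| "(\<delta>, c) \<in> set cs \<Longrightarrow> node_path c \<alpha> d \<Longrightarrow> node_path (Node f cs) ((f, \<delta>) # \<alpha>) d"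

definition wf_tree :: "dtree \<Rightarrow> bool" where
  "wf_tree \<Gamma> \<longleftrightarrow> \<Gamma> \<noteq> [] \<and> (\<forall>v \<in> set \<Gamma>. wf_node v)"

definition tree_At :: "dtree \<Rightarrow> nat set" where
  "tree_At \<Gamma> = {f. \<exists>v \<in> set \<Gamma>. node_att f v}"

text \<open>Complete paths tau of Gamma, given by pi(tau) and the terminal decision.\<close>
definition tree_path :: "dtree \<Rightarrow> (nat \<times> bool) list \<Rightarrow> nat \<Rightarrow> bool" where
  "tree_path \<Gamma> \<alpha> d \<longleftrightarrow> (\<exists>v \<in> set \<Gamma>. node_path v \<alpha> d)"

definition is_ndt :: "dtree \<Rightarrow> dtable \<Rightarrow> bool" where
  "is_ndt \<Gamma> T \<longleftrightarrow>
     wf_tree \<Gamma> \<and> tree_At \<Gamma> \<subseteq> At T \<and>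
     (\<forall>r \<in> set (rows T). \<exists>\<alpha> d. tree_path \<Gamma> \<alpha> d \<and> r \<in> set (rows (subtab T \<alpha>))) \<and>
     (\<forall>\<alpha> d. tree_path \<Gamma> \<alpha> d \<longrightarrow> subtab T \<alpha> = Lambda \<or> d \<in> Pi_dec (subtab T \<alpha>))"

definition is_ddt :: "dtree \<Rightarrow> dtable \<Rightarrow> bool" where
  "is_ddt \<Gamma> T \<longleftrightarrow> is_ndt \<Gamma> T \<and> length \<Gamma> = 1 \<and> (\<forall>v \<in> set \<Gamma>. det_node v)"

definition partially_bounded_measure :: "(nat list \<Rightarrow> nat) \<Rightarrow> bool" where
  "partially_bounded_measure \<psi> \<longleftrightarrow>
     (\<forall>\<alpha>. \<psi> \<alpha> = 0 \<longleftrightarrow> \<alpha> = []) \<and>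
     (\<forall>\<alpha> \<beta>. mset \<alpha> = mset \<beta> \<longrightarrow> \<psi> \<alpha> = \<psi> \<beta>) \<and>
     (\<forall>\<alpha>1 \<alpha>2. \<psi> \<alpha>1 \<le> \<psi> (\<alpha>1 @ \<alpha>2)) \<and>
     (\<forall>\<alpha>1 \<alpha>2. \<psi> (\<alpha>1 @ \<alpha>2) \<le> \<psi> \<alpha>1 + \<psi> \<alpha>2)"

definition bounded_measure :: "(nat list \<Rightarrow> nat) \<Rightarrow> bool" where
  "bounded_measure \<psi> \<longleftrightarrow> partially_bounded_measure \<psi> \<and> (\<forall>\<alpha>. length \<alpha> \<le> \<psi> \<alpha>)"

definition psi_tree :: "(nat list \<Rightarrow> nat) \<Rightarrow> dtree \<Rightarrow> nat" where
  "psi_tree \<psi> \<Gamma> = Max {\<psi> (map fst \<alpha>) | \<alpha> d. tree_path \<Gamma> \<alpha> d}"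

definition psi_d :: "(nat list \<Rightarrow> nat) \<Rightarrow> dtable \<Rightarrow> nat" where
  "psi_d \<psi> T = (if T = Lambda then 0 else (LEAST k. \<exists>\<Gamma>. is_ddt \<Gamma> T \<and> psi_tree \<psi> \<Gamma> = k))"

definition psi_a :: "(nat list \<Rightarrow> nat) \<Rightarrow> dtable \<Rightarrow> nat" where
  "psi_a \<psi> T = (if T = Lambda then 0 else (LEAST k. \<exists>\<Gamma>. is_ndt \<Gamma> T \<and> psi_tree \<psi> \<Gamma> = k))"

definition m_psi :: "(nat list \<Rightarrow> nat) \<Rightarrow> dtable \<Rightarrow> nat" where
  "m_psi \<psi> T = (if At T = {} then 0 else Max ((\<lambda>f. \<psi> [f]) ` At T))"

definition complete_table :: "dtable \<Rightarrow> bool" where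
  "complete_table Q \<longleftrightarrow> Nrows Q = 2 ^ card (At Q)"

text \<open>Sup of an empty set of naturals is 0, matching "0 otherwise".\<close>
definition Zpar :: "dtable \<Rightarrow> nat" where
  "Zpar T = (if T = Lambda then 0
             else Sup {card (At Q) | Q. Q \<in> closure T \<and> complete_table Q})"

definition A_psi :: "(nat list \<Rightarrow> nat) \<Rightarrow> dtable set \<Rightarrow> nat \<Rightarrow> dtable set" where
  "A_psi \<psi> A n = {T \<in> A. m_psi \<psi> T \<le> n}"

text \<open>Partial functions Z_{psi,A} and H^infty_{psi,A}; None = undefined.\<close>
definition Z_fun :: "(nat list \<Rightarrow> nat) \<Rightarrow> dtable set \<Rightarrow> nat \<Rightarrow> nat option" where
  "Z_fun \<psi> A n = (let S = Zpar ` A_psi \<psi> A n in if finite S then Some (Max S) else None)"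

definition H_fun :: "(nat list \<Rightarrow> nat) \<Rightarrow> dtable set \<Rightarrow> nat \<Rightarrow> nat option" where
  "H_fun \<psi> A n = (let S = {psi_d \<psi> T | T. T \<in> A \<and> psi_a \<psi> T \<le> n}
                    in if finite S then Some (Max S) else None)"

end

(*
  Suppose Z_{psi,A}(n) is undefined. Then the closures of the tables of A whose attributes
  all cost at most n contain complete tables with arbitrarily many columns m. Replacing the
  decisions of such a table gives, again in A, the table whose row delta carries the set of
  positions where the word 1 delta 0 switches from 1 to 0. Every row has a switch point that
  is certified by two adjacent attributes, so psi^a <= 2n. But the m + 1 threshold rows
  1^i 0^(m-i) carry the pairwise different singletons {i}, and a deterministic tree whose
  paths have psi-cost at most h, hence length at most h, has at most 2^h leaves; thus
  m < 2^(psi^d). So H_{psi,A}(2n) is undefined.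
*)

theory Submission
  imports Defs "HOL-Library.Infinite_Set"
begin

inductive_simps node_path_Leaf_iff: "node_path (Leaf x) \<alpha> d"
inductive_simps node_path_Node_iff: "node_path (Node f cs) \<alpha> d"
inductive_simps node_att_Leaf_iff: "node_att g (Leaf x)"
inductive_simps node_att_Node_iff: "node_att g (Node f cs)"
inductive_simps det_node_Leaf_iff: "det_node (Leaf x)"
inductive_simps det_node_Node_iff: "det_node (Node f cs)"
inductive_simps wf_node_Leaf_iff: "wf_node (Leaf x)"
inductive_simps wf_node_Node_iff: "wf_node (Node f cs)"

lemmas node_simps = node_path_Leaf_iff node_path_Node_iff node_att_Leaf_iff node_att_Node_iff
  det_node_Leaf_iff det_node_Node_iff wf_node_Leaf_iff wf_node_Node_iff

lemma finite_node_paths: "finite {(\<alpha>, d). node_path v \<alpha> d}"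
proof (induction v)
  case (Leaf x)
  have "{(\<alpha>, d). node_path (Leaf x) \<alpha> d} = {([], x)}"
    by (auto simp: node_simps)
  then show ?case by simp
next
  case (Node f cs)
  have "{(\<alpha>, d). node_path (Node f cs) \<alpha> d} \<subseteq>
     (\<Union>p\<in>set cs. (\<lambda>(\<alpha>, d). ((f, fst p) # \<alpha>, d)) ` {(\<alpha>, d). node_path (snd p) \<alpha> d})"
    by (force simp: node_simps)
  moreover have "finite (\<Union>p\<in>set cs. (\<lambda>(\<alpha>, d). ((f, fst p) # \<alpha>, d)) ` {(\<alpha>, d). node_path (snd p) \<alpha> d})"
    using Node by (force intro: finite_UN_I)
  ultimately show ?case by (rule finite_subset)
qed

lemma finite_node_decisions: "finite {d. \<exists>\<alpha>. node_path v \<alpha> d}"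
proof -
  have "{d. \<exists>\<alpha>. node_path v \<alpha> d} = snd ` {(\<alpha>, d). node_path v \<alpha> d}" by force
  then show ?thesis using finite_node_paths by simp
qed

lemma finite_tree_paths: "finite {(\<alpha>, d). tree_path \<Gamma> \<alpha> d}"
proof -
  have "{(\<alpha>, d). tree_path \<Gamma> \<alpha> d} = (\<Union>v\<in>set \<Gamma>. {(\<alpha>, d). node_path v \<alpha> d})"
    unfolding tree_path_def by auto
  then show ?thesis using finite_node_paths by simp
qed

text \<open>Distinct boolean edge labels let a deterministic node branch at most twice.\<close>
lemma card_node_decisions_le:
  assumes "det_node v" and "\<And>\<alpha> d. node_path v \<alpha> d \<Longrightarrow> length \<alpha> \<le> h"
  shows "card {d. \<exists>\<alpha>. node_path v \<alpha> d} \<le> 2 ^ h"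
  using assms
proof (induction v arbitrary: h rule: det_node.induct)
  case (1 d)
  have "{d'. \<exists>\<alpha>. node_path (Leaf d) \<alpha> d'} = {d}" by (auto simp: node_simps)
  then show ?case by simp
next
  case (2 cs f)
  show ?case
  proof (cases h)
    case 0
    have "{d. \<exists>\<alpha>. node_path (Node f cs) \<alpha> d} = {}"
      using "2.prems" 0 by (force simp: node_simps)
    then show ?thesis by simp
  next
    case (Suc h')
    have child_bound: "card {d. \<exists>\<alpha>. node_path (snd p) \<alpha> d} \<le> 2 ^ h'" if "p \<in> set cs" for p
    proof -
      have "length \<alpha> \<le> h'" if "node_path (snd p) \<alpha> d" for \<alpha> d
      proof -
        have "node_path (Node f cs) ((f, fst p) # \<alpha>) d"
          using \<open>p \<in> set cs\<close> that by (intro node_path.intros(2)[of "fst p" "snd p"]) auto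
        then show ?thesis using "2.prems" Suc by fastforce
      qed
      then show ?thesis using "2.IH" that by blast
    qed
    have "card (set cs) = card (fst ` set cs)"
      using "2.hyps" by (simp add: card_image distinct_card distinct_map)
    also have "\<dots> \<le> card (UNIV :: bool set)" by (rule card_mono) auto
    finally have two_children: "card (set cs) \<le> 2" by simp
    have "{d. \<exists>\<alpha>. node_path (Node f cs) \<alpha> d} = (\<Union>p\<in>set cs. {d. \<exists>\<alpha>. node_path (snd p) \<alpha> d})"
      by (force simp: node_simps)
    then have "card {d. \<exists>\<alpha>. node_path (Node f cs) \<alpha> d}
        \<le> (\<Sum>p\<in>set cs. card {d. \<exists>\<alpha>. node_path (snd p) \<alpha> d})"
      by (simp add: card_UN_le)
    also have "\<dots> \<le> (\<Sum>p\<in>set cs. 2 ^ h')" by (rule sum_mono) (rule child_bound)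
    also have "\<dots> = card (set cs) * 2 ^ h'" by simp
    also have "\<dots> \<le> 2 ^ h" using two_children Suc by simp
    finally show ?thesis .
  qed
qed

lemma finite_psi_tree_values: "finite {\<psi> (map fst \<alpha>) | \<alpha> d. tree_path \<Gamma> \<alpha> d}"
proof -
  have "{\<psi> (map fst \<alpha>) | \<alpha> d. tree_path \<Gamma> \<alpha> d} = (\<lambda>(\<alpha>, d). \<psi> (map fst \<alpha>)) ` {(\<alpha>, d). tree_path \<Gamma> \<alpha> d}"
    by auto
  then show ?thesis using finite_tree_paths by simp
qed

lemma psi_tree_ge: "tree_path \<Gamma> \<alpha> d \<Longrightarrow> \<psi> (map fst \<alpha>) \<le> psi_tree \<psi> \<Gamma>"
  unfolding psi_tree_def by (rule Max_ge[OF finite_psi_tree_values]) blast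

lemma wf_node_has_path: "wf_node v \<Longrightarrow> \<exists>\<alpha> d. node_path v \<alpha> d"
proof (induction v rule: wf_node.induct)
  case (1 d)
  then show ?case by (auto intro: node_path.intros)
next
  case (2 cs f)
  then obtain p where p: "p \<in> set cs" by (metis list.set_intros(1) neq_Nil_conv)
  then obtain \<alpha> d where "node_path (snd p) \<alpha> d" using 2 by blast
  then show ?case
    using p node_path.intros(2)[of "fst p" "snd p" cs] by fastforce
qed

lemma psi_tree_le:
  assumes "wf_tree \<Gamma>" and "\<And>\<alpha> d. tree_path \<Gamma> \<alpha> d \<Longrightarrow> \<psi> (map fst \<alpha>) \<le> k"
  shows "psi_tree \<psi> \<Gamma> \<le> k"
proof -
  have "\<exists>\<alpha> d. tree_path \<Gamma> \<alpha> d"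
    using assms(1) wf_node_has_path unfolding wf_tree_def tree_path_def
    by (metis list.set_intros(1) neq_Nil_conv)
  then show ?thesis
    unfolding psi_tree_def using assms(2) by (subst Max_le_iff[OF finite_psi_tree_values]) auto
qed

lemma psi_a_le_psi_tree: "is_ndt \<Gamma> T \<Longrightarrow> psi_a \<psi> T \<le> psi_tree \<psi> \<Gamma>"
  unfolding psi_a_def by (auto intro!: Least_le)

lemma psi_d_attained:
  assumes "is_ddt \<Gamma> T" and "T \<noteq> Lambda"
  obtains \<Gamma>' where "is_ddt \<Gamma>' T" and "psi_d \<psi> T = psi_tree \<psi> \<Gamma>'"
proof -
  have "\<exists>k \<Gamma>. is_ddt \<Gamma> T \<and> psi_tree \<psi> \<Gamma> = k" using assms(1) by blast
  from LeastI_ex[OF this] show ?thesis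
    using that assms(2) unfolding psi_d_def by auto
qed

lemma partially_bounded_measure_Nil: "partially_bounded_measure \<psi> \<Longrightarrow> \<psi> [] = 0"
  unfolding partially_bounded_measure_def by blast

lemma partially_bounded_measure_append_le:
  "partially_bounded_measure \<psi> \<Longrightarrow> \<psi> (\<alpha> @ \<beta>) \<le> \<psi> \<alpha> + \<psi> \<beta>"
  unfolding partially_bounded_measure_def by blast

lemma bounded_measure_length_le: "bounded_measure \<psi> \<Longrightarrow> length \<alpha> \<le> \<psi> \<alpha>"
  unfolding bounded_measure_def by blast

lemma card_le_exp_psi_d:
  assumes "bounded_measure \<psi>" and "is_ddt \<Gamma> T" and "T \<noteq> Lambda"
    and singleton_rows: "\<And>d. d \<in> D \<Longrightarrow> \<exists>\<delta>. (\<delta>, {d}) \<in> set (rows T)"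
  shows "card D \<le> 2 ^ psi_d \<psi> T"
proof -
  obtain \<Gamma>' where \<Gamma>': "is_ddt \<Gamma>' T" "psi_d \<psi> T = psi_tree \<psi> \<Gamma>'"
    using psi_d_attained assms(2,3) by blast
  then obtain v where v: "\<Gamma>' = [v]" "det_node v"
    unfolding is_ddt_def by (auto simp: length_Suc_conv)
  have "D \<subseteq> {d. \<exists>\<alpha>. node_path v \<alpha> d}"
  proof
    fix d assume "d \<in> D"
    then obtain \<delta> where r: "(\<delta>, {d}) \<in> set (rows T)" using singleton_rows by blast
    then obtain \<alpha> d' where path: "tree_path \<Gamma>' \<alpha> d'" and "(\<delta>, {d}) \<in> set (rows (subtab T \<alpha>))"
      using \<Gamma>'(1) unfolding is_ddt_def is_ndt_def by blast
    moreover from this have "subtab T \<alpha> \<noteq> Lambda" by (auto simp: Lambda_def)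
    ultimately have "d' \<in> Pi_dec (subtab T \<alpha>)" "Pi_dec (subtab T \<alpha>) \<subseteq> {d}"
      using \<Gamma>'(1) unfolding is_ddt_def is_ndt_def Pi_dec_def by (blast, force)
    then show "d \<in> {d. \<exists>\<alpha>. node_path v \<alpha> d}" using path v(1) unfolding tree_path_def by auto
  qed
  then have "card D \<le> card {d. \<exists>\<alpha>. node_path v \<alpha> d}"
    by (rule card_mono[OF finite_node_decisions])
  also have "\<dots> \<le> 2 ^ psi_tree \<psi> \<Gamma>'"
  proof (rule card_node_decisions_le[OF v(2)])
    fix \<alpha> d assume "node_path v \<alpha> d"
    then have "\<psi> (map fst \<alpha>) \<le> psi_tree \<psi> \<Gamma>'"
      using psi_tree_ge[of \<Gamma>' \<alpha> d \<psi>] v(1) unfolding tree_path_def by simp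
    moreover have "length \<alpha> \<le> \<psi> (map fst \<alpha>)"
      using bounded_measure_length_le[OF assms(1), of "map fst \<alpha>"] by simp
    ultimately show "length \<alpha> \<le> psi_tree \<psi> \<Gamma>'" by simp
  qed
  finally show ?thesis using \<Gamma>'(2) by simp
qed

definition row_matches :: "dtable \<Rightarrow> (nat \<times> bool) list \<Rightarrow> bool list \<times> nat set \<Rightarrow> bool" where
  "row_matches T \<alpha> r \<longleftrightarrow> (\<forall>q\<in>set \<alpha>. row_val (cols T) (fst r) (fst q) = Some (snd q))"

lemma rows_subtab_iff: "r \<in> set (rows (subtab T \<alpha>)) \<longleftrightarrow> r \<in> set (rows T) \<and> row_matches T \<alpha> r"
  unfolding subtab_def row_matches_def Let_def by (auto simp: Lambda_def filter_empty_conv)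

lemma subtab_Lambda_or_decision:
  assumes "\<And>r. r \<in> set (rows T) \<Longrightarrow> row_matches T \<alpha> r \<Longrightarrow> d \<in> snd r"
  shows "subtab T \<alpha> = Lambda \<or> d \<in> Pi_dec (subtab T \<alpha>)"
  unfolding Pi_dec_def using assms rows_subtab_iff by blast

lemma wf_table_row_val:
  assumes "wf_table T" and "r \<in> set (rows T)" and "i < length (cols T)"
  shows "row_val (cols T) (fst r) (cols T ! i) = Some b \<longleftrightarrow> fst r ! i = b"
  using assms unfolding wf_table_def row_val_def by (simp add: map_of_zip_nth)

fun path_node :: "(nat \<times> bool) list \<Rightarrow> nat \<Rightarrow> dnode" where
  "path_node [] d = Leaf d"
| "path_node ((f, b) # \<alpha>) d = Node f [(b, path_node \<alpha> d)]"

lemma node_path_path_node_iff: "node_path (path_node \<alpha> d) \<beta> d' \<longleftrightarrow> \<beta> = \<alpha> \<and> d' = d"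
  by (induction \<alpha> d arbitrary: \<beta> rule: path_node.induct) (auto simp: node_simps)

lemma node_att_path_node: "node_att f (path_node \<alpha> d) \<Longrightarrow> f \<in> fst ` set \<alpha>"
  by (induction \<alpha> d rule: path_node.induct) (auto simp: node_simps)

lemma wf_node_path_node: "wf_node (path_node \<alpha> d)"
  by (induction \<alpha> d rule: path_node.induct) (auto simp: node_simps)

fun chain_node :: "nat list \<Rightarrow> nat \<Rightarrow> dnode" where
  "chain_node [] k = Leaf k"
| "chain_node (f # fs) k = Node f [(False, Leaf k), (True, chain_node fs (Suc k))]"

definition chain_word :: "nat list \<Rightarrow> nat \<Rightarrow> (nat \<times> bool) list" where
  "chain_word fs j = map (\<lambda>f. (f, True)) (take j fs) @ (if j < length fs then [(fs ! j, False)] else [])"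

lemma node_path_chain_nodeD:
  "node_path (chain_node fs k) \<alpha> d \<Longrightarrow> \<exists>j\<le>length fs. d = k + j \<and> \<alpha> = chain_word fs j"
proof (induction fs arbitrary: k \<alpha>)
  case Nil
  then show ?case by (simp add: node_simps chain_word_def)
next
  case (Cons f fs)
  from Cons.prems obtain \<delta> v \<alpha>' where \<alpha>: "\<alpha> = (f, \<delta>) # \<alpha>'"
    and v: "(\<delta>, v) \<in> set [(False, Leaf k), (True, chain_node fs (Suc k))]" and "node_path v \<alpha>' d"
    by (auto simp: node_simps)
  show ?case
  proof (cases \<delta>)
    case False
    then show ?thesis using \<alpha> v \<open>node_path v \<alpha>' d\<close>
      by (intro exI[of _ 0]) (auto simp: node_simps chain_word_def)
  next
    case True
    then obtain j where "j \<le> length fs" "d = Suc k + j" "\<alpha>' = chain_word fs j"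
      using Cons.IH[of "Suc k" \<alpha>'] v \<open>node_path v \<alpha>' d\<close> by auto
    then show ?thesis using \<alpha> True by (intro exI[of _ "Suc j"]) (simp add: chain_word_def)
  qed
qed

lemma node_path_chain_node: "j \<le> length fs \<Longrightarrow> node_path (chain_node fs k) (chain_word fs j) (k + j)"
proof (induction fs arbitrary: j k)
  case Nil
  then show ?case by (simp add: node_simps chain_word_def)
next
  case (Cons f fs)
  show ?case
  proof (cases j)
    case 0
    have "node_path (Leaf k) [] k" by (simp add: node_path_Leaf_iff)
    then show ?thesis using 0 by (auto simp: node_path_Node_iff chain_word_def)
  next
    case (Suc j')
    then have "node_path (chain_node fs (Suc k)) (chain_word fs j') (Suc k + j')"
      using Cons.IH[of j' "Suc k"] Cons.prems by simp
    moreover have "chain_word (f # fs) j = (f, True) # chain_word fs j'"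
      using Suc by (simp add: chain_word_def)
    ultimately show ?thesis using Suc by (auto simp: node_path_Node_iff)
  qed
qed

lemma node_att_chain_node: "node_att f (chain_node fs k) \<Longrightarrow> f \<in> set fs"
  by (induction fs arbitrary: k) (auto simp: node_simps)

lemma wf_node_chain_node: "wf_node (chain_node fs k)"
  by (induction fs arbitrary: k) (auto simp: node_simps)

lemma det_node_chain_node: "det_node (chain_node fs k)"
  by (induction fs arbitrary: k) (auto simp: node_simps)

text \<open>i is a switch point of \<delta> iff the word True # \<delta> @ [False] has True at i and False at i + 1.\<close>
definition switch_points :: "bool list \<Rightarrow> nat set" where
  "switch_points \<delta> = {i. i \<le> length \<delta> \<and> (i = 0 \<or> \<delta> ! (i - 1)) \<and> (i = length \<delta> \<or> \<not> \<delta> ! i)}"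

lemma finite_switch_points: "finite (switch_points \<delta>)"
  unfolding switch_points_def by (rule finite_subset[of _ "{..length \<delta>}"]) auto

lemma switch_pointsI:
  assumes "j \<le> length \<delta>" and "\<And>i. i < j \<Longrightarrow> \<delta> ! i" and "j < length \<delta> \<Longrightarrow> \<not> \<delta> ! j"
  shows "j \<in> switch_points \<delta>"
  using assms unfolding switch_points_def by (cases j) auto

lemma takeWhile_id_nth:
  shows "i < length (takeWhile id \<delta>) \<Longrightarrow> \<delta> ! i"
    and "length (takeWhile id \<delta>) < length \<delta> \<Longrightarrow> \<not> \<delta> ! length (takeWhile id \<delta>)"
proof -
  show "\<delta> ! i" if "i < length (takeWhile id \<delta>)"
    using nth_mem[OF that] set_takeWhileD takeWhile_nth[OF that] by fastforce
  show "\<not> \<delta> ! length (takeWhile id \<delta>)" if "length (takeWhile id \<delta>) < length \<delta>"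
    using nth_length_takeWhile[OF that] by simp
qed

lemma switch_points_nonempty: "switch_points \<delta> \<noteq> {}"
  using switch_pointsI[OF length_takeWhile_le takeWhile_id_nth] by blast

definition threshold_vector :: "nat \<Rightarrow> nat \<Rightarrow> bool list" where
  "threshold_vector i m = map (\<lambda>j. j < i) [0..<m]"

lemma switch_points_threshold_vector:
  assumes "i \<le> m"
  shows "switch_points (threshold_vector i m) = {i}"
proof
  have nth: "threshold_vector i m ! j \<longleftrightarrow> j < i" if "j < m" for j
    using that by (simp add: threshold_vector_def)
  show "switch_points (threshold_vector i m) \<subseteq> {i}"
  proof
    fix x assume "x \<in> switch_points (threshold_vector i m)"
    then have "x \<le> m" "x = 0 \<or> threshold_vector i m ! (x - 1)" "x = m \<or> \<not> threshold_vector i m ! x"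
      by (simp_all add: switch_points_def threshold_vector_def)
    then show "x \<in> {i}"
      using assms nth[of x] nth[of "x - 1"] by (cases "x < i"; cases "i < x") (auto simp: less_diff_conv2)
  qed
  show "{i} \<subseteq> switch_points (threshold_vector i m)"
    using assms nth by (auto intro!: switch_pointsI simp: threshold_vector_def)
qed

definition switch_table :: "nat \<Rightarrow> dtable \<Rightarrow> bool" where
  "switch_table m T \<longleftrightarrow> wf_table T \<and> length (cols T) = m \<and>
     set (rows T) = {(\<delta>, switch_points \<delta>) | \<delta>. length \<delta> = m}"

lemma switch_table_not_Lambda: "switch_table m T \<Longrightarrow> T \<noteq> Lambda"
  unfolding switch_table_def Lambda_def by auto

definition switch_test :: "nat list \<Rightarrow> nat \<Rightarrow> (nat \<times> bool) list" where
  "switch_test fs i = (if 0 < i then [(fs ! (i - 1), True)] else []) @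
     (if i < length fs then [(fs ! i, False)] else [])"

lemma row_matches_switch_test:
  assumes "wf_table T" and "r \<in> set (rows T)" and "i \<le> length (cols T)"
  shows "row_matches T (switch_test (cols T) i) r \<longleftrightarrow> i \<in> switch_points (fst r)"
proof -
  have "row_matches T (switch_test (cols T) i) r \<longleftrightarrow>
      (0 < i \<longrightarrow> row_val (cols T) (fst r) (cols T ! (i - 1)) = Some True) \<and>
      (i < length (cols T) \<longrightarrow> row_val (cols T) (fst r) (cols T ! i) = Some False)"
    unfolding row_matches_def switch_test_def by auto
  also have "\<dots> \<longleftrightarrow> (0 < i \<longrightarrow> fst r ! (i - 1)) \<and> (i < length (cols T) \<longrightarrow> \<not> fst r ! i)"
    using assms(3) wf_table_row_val[OF assms(1,2), of "i - 1"] wf_table_row_val[OF assms(1,2), of i]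
    by auto
  also have "\<dots> \<longleftrightarrow> i \<in> switch_points (fst r)"
    using assms unfolding wf_table_def switch_points_def by auto
  finally show ?thesis .
qed

lemma row_matches_chain_word:
  assumes "wf_table T" and "r \<in> set (rows T)" and "j \<le> length (cols T)"
  shows "row_matches T (chain_word (cols T) j) r \<longleftrightarrow>
    (\<forall>i<j. fst r ! i) \<and> (j < length (cols T) \<longrightarrow> \<not> fst r ! j)"
proof -
  have "row_matches T (chain_word (cols T) j) r \<longleftrightarrow>
      (\<forall>i<j. row_val (cols T) (fst r) (cols T ! i) = Some True) \<and>
      (j < length (cols T) \<longrightarrow> row_val (cols T) (fst r) (cols T ! j) = Some False)"
  proof -
    have "(\<forall>f\<in>set (take j (cols T)). row_val (cols T) (fst r) f = Some True) \<longleftrightarrow>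
        (\<forall>i<j. row_val (cols T) (fst r) (cols T ! i) = Some True)"
      using assms(3) by (simp add: all_set_conv_all_nth)
    then show ?thesis unfolding row_matches_def chain_word_def by (simp add: ball_Un)
  qed
  also have "\<dots> \<longleftrightarrow> (\<forall>i<j. fst r ! i) \<and> (j < length (cols T) \<longrightarrow> \<not> fst r ! j)"
    using assms(3) wf_table_row_val[OF assms(1,2)] by (auto dest: order.strict_trans2)
  finally show ?thesis .
qed

lemma switch_table_rowD:
  "switch_table m T \<Longrightarrow> r \<in> set (rows T) \<Longrightarrow> length (fst r) = m \<and> snd r = switch_points (fst r)"
  unfolding switch_table_def by auto

definition switch_tree :: "nat list \<Rightarrow> dtree" where
  "switch_tree fs = map (\<lambda>i. path_node (switch_test fs i) i) [0..<Suc (length fs)]"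

lemma tree_path_switch_tree_iff:
  "tree_path (switch_tree fs) \<alpha> d \<longleftrightarrow> d \<le> length fs \<and> \<alpha> = switch_test fs d"
  unfolding tree_path_def switch_tree_def by (auto simp: node_path_path_node_iff)

lemma is_ndt_switch_tree:
  assumes T: "switch_table m T"
  shows "is_ndt (switch_tree (cols T)) T"
  unfolding is_ndt_def
proof (intro conjI allI impI ballI)
  have wf: "wf_table T" using T unfolding switch_table_def by blast
  show "wf_tree (switch_tree (cols T))"
    unfolding wf_tree_def switch_tree_def by (auto simp: wf_node_path_node)
  show "tree_At (switch_tree (cols T)) \<subseteq> At T"
  proof
    fix f assume "f \<in> tree_At (switch_tree (cols T))"
    then obtain i where "i \<le> length (cols T)" "node_att f (path_node (switch_test (cols T) i) i)"
      unfolding tree_At_def switch_tree_def by (auto simp del: upt_Suc simp: less_Suc_eq_le)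
    then show "f \<in> At T"
      using node_att_path_node unfolding At_def switch_test_def by (fastforce split: if_splits)
  qed
  show "\<exists>\<alpha> d. tree_path (switch_tree (cols T)) \<alpha> d \<and> r \<in> set (rows (subtab T \<alpha>))"
    if r: "r \<in> set (rows T)" for r
  proof -
    obtain i where i: "i \<in> switch_points (fst r)" using switch_points_nonempty by blast
    then have "i \<le> length (cols T)"
      using switch_table_rowD[OF T r] T unfolding switch_points_def switch_table_def by auto
    then show ?thesis using i row_matches_switch_test[OF wf r] r
      by (auto simp: tree_path_switch_tree_iff rows_subtab_iff)
  qed
  show "subtab T \<alpha> = Lambda \<or> d \<in> Pi_dec (subtab T \<alpha>)"
    if "tree_path (switch_tree (cols T)) \<alpha> d" for \<alpha> d
  proof (rule subtab_Lambda_or_decision)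
    fix r assume "r \<in> set (rows T)" and "row_matches T \<alpha> r"
    then show "d \<in> snd r"
      using that row_matches_switch_test[OF wf] switch_table_rowD[OF T]
      by (auto simp: tree_path_switch_tree_iff)
  qed
qed

lemma switch_table_psi_a_le:
  assumes "partially_bounded_measure \<psi>" and T: "switch_table m T"
    and cost: "\<And>f. f \<in> At T \<Longrightarrow> \<psi> [f] \<le> n"
  shows "psi_a \<psi> T \<le> 2 * n"
proof -
  have short: "\<psi> fs \<le> n" if "set fs \<subseteq> At T" "length fs \<le> 1" for fs
  proof (cases fs)
    case Nil
    then show ?thesis using partially_bounded_measure_Nil[OF assms(1)] by simp
  next
    case (Cons f fs')
    then have "fs = [f]" using that(2) by simp
    then show ?thesis using that(1) cost by simp
  qed
  have "psi_tree \<psi> (switch_tree (cols T)) \<le> 2 * n"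
  proof (rule psi_tree_le)
    show "wf_tree (switch_tree (cols T))"
      using is_ndt_switch_tree[OF T] unfolding is_ndt_def by blast
    fix \<alpha> d assume "tree_path (switch_tree (cols T)) \<alpha> d"
    then have d: "d \<le> length (cols T)" and \<alpha>: "\<alpha> = switch_test (cols T) d"
      by (simp_all add: tree_path_switch_tree_iff)
    define fs1 where "fs1 = (if 0 < d then [cols T ! (d - 1)] else [])"
    define fs2 where "fs2 = (if d < length (cols T) then [cols T ! d] else [])"
    have "map fst \<alpha> = fs1 @ fs2" unfolding \<alpha> fs1_def fs2_def switch_test_def by simp
    moreover have "\<psi> fs1 \<le> n" "\<psi> fs2 \<le> n"
      using d by (auto intro!: short simp: fs1_def fs2_def At_def)
    ultimately show "\<psi> (map fst \<alpha>) \<le> 2 * n"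
      using partially_bounded_measure_append_le[OF assms(1), of fs1 fs2] by simp
  qed
  then show ?thesis
    using psi_a_le_psi_tree[OF is_ndt_switch_tree[OF T]] by (rule order_trans[rotated])
qed

lemma is_ddt_chain_node:
  assumes T: "switch_table m T"
  shows "is_ddt [chain_node (cols T) 0] T"
  unfolding is_ddt_def is_ndt_def
proof (intro conjI allI impI ballI)
  have wf: "wf_table T" using T unfolding switch_table_def by blast
  have len: "length (fst r) = length (cols T)" if "r \<in> set (rows T)" for r
    using switch_table_rowD[OF T that] T unfolding switch_table_def by simp
  show "wf_tree [chain_node (cols T) 0]" by (simp add: wf_tree_def wf_node_chain_node)
  show "tree_At [chain_node (cols T) 0] \<subseteq> At T"
    unfolding tree_At_def At_def using node_att_chain_node by auto
  show "length [chain_node (cols T) 0] = 1" by simp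
  show "det_node v" if "v \<in> set [chain_node (cols T) 0]" for v
    using that by (simp add: det_node_chain_node)
  show "\<exists>\<alpha> d. tree_path [chain_node (cols T) 0] \<alpha> d \<and> r \<in> set (rows (subtab T \<alpha>))"
    if r: "r \<in> set (rows T)" for r
  proof -
    define j where "j = length (takeWhile id (fst r))"
    have j: "j \<le> length (cols T)" using len[OF r] length_takeWhile_le j_def by metis
    have "row_matches T (chain_word (cols T) j) r"
      using row_matches_chain_word[OF wf r j] takeWhile_id_nth len[OF r] unfolding j_def by simp
    moreover have "tree_path [chain_node (cols T) 0] (chain_word (cols T) j) j"
      using node_path_chain_node[OF j, of 0] unfolding tree_path_def by simp
    ultimately show ?thesis using r rows_subtab_iff by blast
  qed
  show "subtab T \<alpha> = Lambda \<or> d \<in> Pi_dec (subtab T \<alpha>)"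
    if path: "tree_path [chain_node (cols T) 0] \<alpha> d" for \<alpha> d
  proof (rule subtab_Lambda_or_decision)
    obtain j where j: "j \<le> length (cols T)" "d = j" "\<alpha> = chain_word (cols T) j"
      using path node_path_chain_nodeD[of "cols T" 0] unfolding tree_path_def by auto
    fix r assume r: "r \<in> set (rows T)" and "row_matches T \<alpha> r"
    then have "j \<in> switch_points (fst r)"
      using row_matches_chain_word[OF wf r j(1)] j len[OF r] by (auto intro: switch_pointsI)
    then show "d \<in> snd r" using switch_table_rowD[OF T r] j(2) by simp
  qed
qed

lemma switch_table_psi_d_gt:
  assumes "bounded_measure \<psi>" and T: "switch_table m T"
  shows "m < 2 ^ psi_d \<psi> T"
proof -
  have "card {..m} \<le> 2 ^ psi_d \<psi> T"
  proof (rule card_le_exp_psi_d[OF assms(1) is_ddt_chain_node[OF T] switch_table_not_Lambda[OF T]])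
    fix d assume "d \<in> {..m}"
    then have "(threshold_vector d m, {d}) \<in> set (rows T)"
      using T switch_points_threshold_vector[of d m]
      unfolding switch_table_def by (auto simp: threshold_vector_def)
    then show "\<exists>\<delta>. (\<delta>, {d}) \<in> set (rows T)" by blast
  qed
  then show ?thesis by simp
qed

lemma less_Sup_natD: "(k::nat) < Sup S \<Longrightarrow> \<exists>x\<in>S. k < x"
proof (rule ccontr)
  assume "k < Sup S" and "\<not> (\<exists>x\<in>S. k < x)"
  moreover have "Sup S \<le> k" if "S \<noteq> {}" "\<forall>x\<in>S. x \<le> k"
    using that by (simp add: cSup_least)
  ultimately show False by (cases "S = {}") (auto simp: not_less)
qed

lemma Z_fun_None_unbounded:
  assumes "Z_fun \<psi> A n = None"
  obtains T where "T \<in> A" and "m_psi \<psi> T \<le> n" and "k < Zpar T"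
proof -
  have "infinite (Zpar ` A_psi \<psi> A n)"
    using assms unfolding Z_fun_def Let_def by (auto split: if_splits)
  then obtain z where "z \<in> Zpar ` A_psi \<psi> A n" "k < z"
    using finite_nat_set_iff_bounded_le not_less by metis
  then show ?thesis using that unfolding A_psi_def by blast
qed

lemma complete_table_in_closure:
  assumes "k < Zpar T"
  obtains Q where "Q \<in> closure T" and "complete_table Q" and "k < card (At Q)"
proof -
  have "T \<noteq> Lambda" using assms unfolding Zpar_def by auto
  then have "k < Sup {card (At Q) | Q. Q \<in> closure T \<and> complete_table Q}"
    using assms unfolding Zpar_def by simp
  then show ?thesis using that less_Sup_natD by blast
qed

lemma opJ_complete_rows:
  assumes wf: "wf_table (opJ \<mu> X)" and "complete_table X"
  shows "set (rows (opJ \<mu> X)) = {(\<delta>, \<mu> \<delta>) | \<delta>. length \<delta> = length (cols X)}"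
proof -
  define m where "m = length (cols X)"
  have dist: "distinct (map fst (rows X))" "distinct (cols X)"
    using wf unfolding wf_table_def opJ_def by (simp_all add: comp_def)
  have "card (set (map fst (rows X))) = 2 ^ m"
    using assms(2) dist unfolding complete_table_def Nrows_def At_def m_def
    by (simp add: distinct_card del: set_map)
  moreover have "set (map fst (rows X)) \<subseteq> {\<delta>. set \<delta> \<subseteq> UNIV \<and> length \<delta> = m}"
    using wf unfolding wf_table_def opJ_def m_def by auto
  moreover have "card {\<delta> :: bool list. set \<delta> \<subseteq> UNIV \<and> length \<delta> = m} = 2 ^ m"
    using card_lists_length_eq[of "UNIV :: bool set" m] by simp
  ultimately have "set (map fst (rows X)) = {\<delta>. length \<delta> = m}"
    using card_subset_eq[OF finite_lists_length_eq[of "UNIV :: bool set" m]] by auto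
  then show ?thesis unfolding opJ_def m_def by force
qed

lemma opI_At_subset: "At (opI D T) \<subseteq> At T"
  unfolding opI_def At_def Lambda_def by auto

lemma closed_class_switch_table:
  assumes A: "closed_class A" and "T \<in> A" and Q: "Q \<in> closure T" "complete_table Q"
  obtains T' where "T' \<in> A" and "switch_table (card (At Q)) T'" and "At T' \<subseteq> At T"
proof -
  obtain D \<nu> where Q_def: "Q = opJ \<nu> (opI D T)" and D: "D \<subseteq> At T"
    using Q(1) unfolding closure_def by blast
  define T' where "T' = opJ switch_points (opI D T)"
  have "T' \<in> closure T"
    unfolding closure_def T'_def using D switch_points_nonempty finite_switch_points
    by (intro CollectI exI[of _ D] exI[of _ switch_points]) simp
  then have "T' \<in> A" using A \<open>T \<in> A\<close> unfolding closed_class_def closure_set_def by blast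
  then have wf: "wf_table T'" using A unfolding closed_class_def M2_def by blast
  have cols: "cols T' = cols (opI D T)" "cols Q = cols (opI D T)"
    unfolding T'_def Q_def opJ_def by simp_all
  have "complete_table (opI D T)"
    using Q(2) unfolding Q_def complete_table_def Nrows_def At_def opJ_def by simp
  then have "set (rows T') = {(\<delta>, switch_points \<delta>) | \<delta>. length \<delta> = length (cols T')}"
    using opJ_complete_rows[of switch_points "opI D T"] wf cols(1) unfolding T'_def by simp
  moreover have "length (cols T') = card (At Q)"
    using wf cols unfolding wf_table_def At_def by (simp add: distinct_card)
  moreover have "At T' \<subseteq> At T"
    using opI_At_subset[of D T] cols(1) unfolding At_def by simp
  ultimately show ?thesis using that \<open>T' \<in> A\<close> wf unfolding switch_table_def by simp
qed

lemma m_psi_ge: "f \<in> At T \<Longrightarrow> \<psi> [f] \<le> m_psi \<psi> T"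
  unfolding m_psi_def At_def by auto

lemma closed_class_large_switch_table:
  assumes "closed_class A" and "Z_fun \<psi> A n = None"
  obtains m T where "T \<in> A" and "switch_table m T" and "k < m"
    and "\<And>f. f \<in> At T \<Longrightarrow> \<psi> [f] \<le> n"
proof -
  obtain T where T: "T \<in> A" "m_psi \<psi> T \<le> n" "k < Zpar T"
    using Z_fun_None_unbounded[OF assms(2)] by blast
  then obtain Q where Q: "Q \<in> closure T" "complete_table Q" "k < card (At Q)"
    using complete_table_in_closure by blast
  then obtain T' where "T' \<in> A" "switch_table (card (At Q)) T'" "At T' \<subseteq> At T"
    using closed_class_switch_table[OF assms(1) T(1)] by blast
  then show ?thesis using that Q(3) m_psi_ge[of _ T \<psi>] T(2) by (meson order_trans subsetD)
qed

theorem lemma11: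
  fixes A :: "dtable set" and \<psi> :: "nat list \<Rightarrow> nat"
  assumes "closed_class A"
    and "nontrivial A"
    and "bounded_measure \<psi>"
    and "\<exists>n. Z_fun \<psi> A n = None"
  shows "\<exists>n. H_fun \<psi> A n = None"
proof -
  obtain n where Z: "Z_fun \<psi> A n = None" using assms(4) by blast
  have unbounded: "\<exists>T\<in>A. psi_a \<psi> T \<le> 2 * n \<and> k < psi_d \<psi> T" for k
  proof -
    obtain m T where T: "T \<in> A" "switch_table m T" "2 ^ k < m"
      and cost: "\<And>f. f \<in> At T \<Longrightarrow> \<psi> [f] \<le> n"
      using closed_class_large_switch_table[OF assms(1) Z] by blast
    have "partially_bounded_measure \<psi>" using assms(3) unfolding bounded_measure_def by blast
    then have "psi_a \<psi> T \<le> 2 * n" using switch_table_psi_a_le T(2) cost by blast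
    moreover have "(2::nat) ^ k < 2 ^ psi_d \<psi> T"
      using switch_table_psi_d_gt[OF assms(3) T(2)] T(3) by linarith
    then have "k < psi_d \<psi> T" by simp
    ultimately show ?thesis using T(1) by blast
  qed
  have "infinite {psi_d \<psi> T | T. T \<in> A \<and> psi_a \<psi> T \<le> 2 * n}"
    unfolding infinite_nat_iff_unbounded using unbounded by blast
  then have "H_fun \<psi> A (2 * n) = None" unfolding H_fun_def Let_def by simp
  then show ?thesis by blast
qed

end
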